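(* The Dehn function of $K=\ker\big(\psi\colon F_2^{(a)}\times F_2^{(b)}\times F_2^{(c)}\to\mathbb Z^2\big)$ satisfies $\delta_K(N)\succcurlyeq N^4$.
   Context: $F_2^{(a)},F_2^{(b)},F_2^{(c)}$ are free groups with bases $a_1,a_2$; $b_1,b_2$; $c_1,c_2$, and $\psi$ sends $a_i,b_i,c_i$ to the $i$-th standard basis vector $e_i$; $K$ is finitely presented. The Dehn function of a finitely presented $G=\langle S\mid\mathcal R\rangle$ is $\delta_G(N)=\max\{\mathrm{Area}(w):|w|\le N,\ w=_G1\}$, where $\mathrm{Area}(w)$ is the least number of conjugates of elements of $\mathcal R^{\pm1}$ whose product is $w$ in $F(S)$. For $f,g\colon\mathbb N\to\mathbb N$, $g\succcurlyeq f$ means $f(N)\le Cg(CN+C)+CN+C$ for some $C>0$. *)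

theory Defs
  imports Main
begin

text \<open>A word over an alphabet 'a is a list of letters (x, True) = x and (x, False) = x^-1.\<close>
type_synonym 'a word = "('a \<times> bool) list"

definition letters :: "'a word \<Rightarrow> 'a set" where
  "letters w = fst ` set w"

definition winv :: "'a word \<Rightarrow> 'a word" where
  "winv w = rev (map (\<lambda>(x, b). (x, \<not> b)) w)"

definition free_step :: "'a word \<Rightarrow> 'a word \<Rightarrow> bool" where
  "free_step u v \<longleftrightarrow> (\<exists>p q x b. u = p @ [(x, b), (x, \<not> b)] @ q \<and> v = p @ q)"

definition free_eq :: "'a word \<Rightarrow> 'a word \<Rightarrow> bool" where
  "free_eq = (\<lambda>u v. free_step u v \<or> free_step v u)\<^sup>*\<^sup>*"

definition finite_pres :: "'s set \<Rightarrow> 's word set \<Rightarrow> bool" where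
  "finite_pres S R \<longleftrightarrow> finite S \<and> finite R \<and> (\<forall>r\<in>R. letters r \<subseteq> S)"

definition prod_conj :: "('s word \<times> 's word \<times> bool) list \<Rightarrow> 's word" where
  "prod_conj cs = concat (map (\<lambda>(u, r, e). u @ (if e then r else winv r) @ winv u) cs)"

definition area_witness :: "'s set \<Rightarrow> 's word set \<Rightarrow> 's word \<Rightarrow> ('s word \<times> 's word \<times> bool) list \<Rightarrow> bool" where
  "area_witness S R w cs \<longleftrightarrow>
     (\<forall>(u, r, e) \<in> set cs. r \<in> R \<and> letters u \<subseteq> S) \<and> free_eq (prod_conj cs) w"

definition null_pres :: "'s set \<Rightarrow> 's word set \<Rightarrow> 's word \<Rightarrow> bool" where
  "null_pres S R w \<longleftrightarrow> (\<exists>cs. area_witness S R w cs)"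

definition area :: "'s set \<Rightarrow> 's word set \<Rightarrow> 's word \<Rightarrow> nat" where
  "area S R w = (LEAST n. \<exists>cs. length cs = n \<and> area_witness S R w cs)"

definition dehn :: "'s set \<Rightarrow> 's word set \<Rightarrow> nat \<Rightarrow> nat" where
  "dehn S R N = Max {area S R w | w. letters w \<subseteq> S \<and> length w \<le> N \<and> null_pres S R w}"

definition dehn_dominates :: "(nat \<Rightarrow> nat) \<Rightarrow> (nat \<Rightarrow> nat) \<Rightarrow> bool" where
  "dehn_dominates g f \<longleftrightarrow> (\<exists>C>0. \<forall>N. f N \<le> C * g (C * N + C) + C * N + C)"

datatype gen2 = X1 | X2

text \<open>Element of F_2^(a) x F_2^(b) x F_2^(c), as a triple of words.\<close>
type_synonym triple = "gen2 word \<times> gen2 word \<times> gen2 word"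

definition expsum :: "gen2 \<Rightarrow> gen2 word \<Rightarrow> int" where
  "expsum i w = sum_list (map (\<lambda>(x, b). if x = i then (if b then 1 else -1) else 0) w)"

text \<open>psi(x,y,z) = 0, where psi(a_i)=psi(b_i)=psi(c_i)=e_i.\<close>
definition inK :: "triple \<Rightarrow> bool" where
  "inK t \<longleftrightarrow> (case t of (x, y, z) \<Rightarrow>
     (\<forall>i. expsum i x + expsum i y + expsum i z = 0))"

definition teq :: "triple \<Rightarrow> triple \<Rightarrow> bool" where
  "teq t t' \<longleftrightarrow> (case t of (x, y, z) \<Rightarrow> case t' of (x', y', z') \<Rightarrow>
     free_eq x x' \<and> free_eq y y' \<and> free_eq z z')"

definition tinv :: "triple \<Rightarrow> triple" where
  "tinv t = (case t of (x, y, z) \<Rightarrow> (winv x, winv y, winv z))"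

definition tmul :: "triple \<Rightarrow> triple \<Rightarrow> triple" where
  "tmul t t' = (case t of (x, y, z) \<Rightarrow> case t' of (x', y', z') \<Rightarrow> (x @ x', y @ y', z @ z'))"

definition teval :: "('s \<Rightarrow> triple) \<Rightarrow> 's word \<Rightarrow> triple" where
  "teval \<phi> w = foldr (\<lambda>(s, b) acc. tmul (if b then \<phi> s else tinv (\<phi> s)) acc) w ([], [], [])"

text \<open>phi : S -> K induces an isomorphism <S | R> \<cong> K.\<close>
definition presents_K :: "'s set \<Rightarrow> 's word set \<Rightarrow> ('s \<Rightarrow> triple) \<Rightarrow> bool" where
  "presents_K S R \<phi> \<longleftrightarrow> finite_pres S R
     \<and> (\<forall>s\<in>S. inK (\<phi> s))
     \<and> (\<forall>t. inK t \<longrightarrow> (\<exists>w. letters w \<subseteq> S \<and> teq (teval \<phi> w) t))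
     \<and> (\<forall>w. letters w \<subseteq> S \<longrightarrow> (teq (teval \<phi> w) ([], [], []) \<longleftrightarrow> null_pres S R w))"

end

theory Submission
  imports Defs
begin

text \<open>Map each factor F_2 onto the integral Heisenberg group H. A word over S then traces a
  lattice path in H^3, and we integrate over it a 1-form eta on the edges of H^3 whose curl
  around any square spanned by two different factors depends only on the image of the corner
  in Z^2. Left translation by an element over 0 in Z^2 therefore changes eta by a closed form,
  so along null-homotopic paths the integral is invariant under translation by (the image of)
  K. Consequently the integral of a product of conjugates of relators is the sum of the
  integrals of the relators, and is bounded by a constant times the area.

  On the other hand, choose words g1, g2, h1, h2 in S representing (a1, b1^-1, 1),
  (a2, 1, c2^-1), (1, b1, c1^-1) and (a2^-1, b2, 1). In F_2^3 the commutators
  U = [g1^n, g2^n] and V = [h1^n, h2^n] equal [a1^n, a2^n] and [b1^n, b2^n], so the word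
  [U, V] of length O(n) is null-homotopic, and its eta integral is 2 n^4.\<close>

lemma winv_simps [simp]:
  "winv [] = []"
  "winv (x # xs) = winv xs @ [(fst x, \<not> snd x)]"
  "winv (xs @ ys) = winv ys @ winv xs"
  by (auto simp: winv_def split: prod.splits)

lemma length_winv [simp]: "length (winv x) = length x"
  by (simp add: winv_def)

lemma winv_replicate: "winv (replicate n (g, b)) = replicate n (g, \<not> b)"
  by (induction n) (auto simp: replicate_append_same)

lemma letters_Nil [simp]: "letters [] = {}"
  by (simp add: letters_def)

lemma letters_append [simp]: "letters (x @ y) = letters x \<union> letters y"
  by (auto simp: letters_def)

lemma letters_winv [simp]: "letters (winv x) = letters x"
  by (induction x) (auto simp: letters_def)

lemma equivp_free_eq: "equivp free_eq"
  unfolding free_eq_def by (rule equivp_rtranclp) (auto intro: sympI)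

lemma free_eq_refl [simp]: "free_eq x x"
  using equivp_reflp[OF equivp_free_eq] .

lemma free_eq_trans: "free_eq x y \<Longrightarrow> free_eq y z \<Longrightarrow> free_eq x z"
  using equivp_transp[OF equivp_free_eq] .

lemma free_eq_invariant:
  assumes cancel: "\<And>p q x b. f (p @ [(x, b), (x, \<not> b)] @ q) = f (p @ q)"
    and "free_eq u v"
  shows "f u = f v"
  using assms(2) unfolding free_eq_def
proof (induction rule: rtranclp_induct)
  case (step v w)
  then show ?case
    unfolding free_step_def using cancel by (metis (no_types, lifting))
qed simp

lemma free_eq_map:
  assumes "\<And>u v. free_step u v \<Longrightarrow> free_step (f u) (f v)"
    and "free_eq u v"
  shows "free_eq (f u) (f v)"
  using assms(2) unfolding free_eq_def
proof (induction rule: rtranclp_induct)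
  case (step v w)
  then have "free_step (f v) (f w) \<or> free_step (f w) (f v)"
    using assms(1) by blast
  with step.IH show ?case
    by (rule rtranclp.rtrancl_into_rtrancl)
qed simp

lemma free_eq_append: "free_eq x x' \<Longrightarrow> free_eq y y' \<Longrightarrow> free_eq (x @ y) (x' @ y')"
proof -
  have "free_step u v \<Longrightarrow> free_step (p @ u @ q) (p @ v @ q)" for u v p q :: "'a word"
    unfolding free_step_def by (metis append.assoc)
  then have ctx: "free_eq u v \<Longrightarrow> free_eq (p @ u @ q) (p @ v @ q)" for u v p q :: "'a word"
    using free_eq_map[where f = "\<lambda>u. p @ u @ q"] by blast
  assume "free_eq x x'" "free_eq y y'"
  then show ?thesis
    using ctx[of x x' "[]" y] ctx[of y y' x' "[]"] free_eq_trans by simp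
qed

lemma free_step_winv:
  assumes "free_step u v"
  shows "free_step (winv u) (winv v)"
proof -
  from assms obtain p q x b where "u = p @ [(x, b), (x, \<not> b)] @ q" and "v = p @ q"
    unfolding free_step_def by blast
  then have "winv u = winv q @ [(x, b), (x, \<not> b)] @ winv p" and "winv v = winv q @ winv p"
    by simp_all
  then show ?thesis
    unfolding free_step_def by blast
qed

lemma free_eq_winv: "free_eq u v \<Longrightarrow> free_eq (winv u) (winv v)"
  using free_eq_map[where f = winv, OF free_step_winv] .

lemma free_eq_append_winv: "free_eq (x @ winv x) []"
proof (induction x)
  case (Cons a x)
  obtain g b where a: "a = (g, b)" by (cases a)
  have "free_eq ([a] @ (x @ winv x) @ [(g, \<not> b)]) ([a] @ [] @ [(g, \<not> b)])"
    by (intro free_eq_append free_eq_refl Cons.IH)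
  moreover have "free_step ([] @ [(g, b), (g, \<not> b)] @ []) ([] @ [])"
    unfolding free_step_def by blast
  then have "free_eq ([a] @ [] @ [(g, \<not> b)]) []"
    unfolding free_eq_def a by auto
  ultimately show ?case
    using free_eq_trans a by fastforce
qed simp

definition wpow :: "'a list \<Rightarrow> nat \<Rightarrow> 'a list" where
  "wpow x n = concat (replicate n x)"

definition comm :: "'a word \<Rightarrow> 'a word \<Rightarrow> 'a word" where
  "comm x y = x @ y @ winv x @ winv y"

lemma wpow_simps [simp]: "wpow x 0 = []" "wpow x (Suc n) = x @ wpow x n"
  by (simp_all add: wpow_def)

lemma wpow_singleton [simp]: "wpow [a] n = replicate n a"
  by (induction n) auto

lemma wpow_Nil [simp]: "wpow [] n = []"
  by (induction n) auto

lemma length_wpow: "length (wpow x n) = n * length x"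
  by (induction n) auto

lemma letters_wpow: "letters (wpow x n) \<subseteq> letters x"
  by (induction n) auto

lemma length_comm: "length (comm x y) = 2 * length x + 2 * length y"
  by (simp add: comm_def)

lemma letters_comm [simp]: "letters (comm x y) = letters x \<union> letters y"
  by (auto simp: comm_def)

lemma free_eq_wpow: "free_eq x x' \<Longrightarrow> free_eq (wpow x n) (wpow x' n)"
  by (induction n) (auto intro: free_eq_append)

lemma free_eq_comm: "free_eq x x' \<Longrightarrow> free_eq y y' \<Longrightarrow> free_eq (comm x y) (comm x' y')"
  unfolding comm_def by (intro free_eq_append free_eq_winv)

lemma free_eq_comm_Nil_right: "free_eq (comm x []) []"
  unfolding comm_def using free_eq_append_winv by simp

lemma free_eq_comm_Nil_left: "free_eq (comm [] y) []"
  unfolding comm_def using free_eq_append_winv by simp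

section \<open>The Heisenberg group\<close>

text \<open>The triple (x1, x2, z) is the unitriangular matrix with entries x1, x2 above the diagonal
  and z in the corner; X1 and X2 act by right multiplication with the two standard generators.\<close>

type_synonym heis = "int \<times> int \<times> int"

fun heis_mul :: "heis \<Rightarrow> heis \<Rightarrow> heis" where
  "heis_mul (t1, t2, tz) (x1, x2, z) = (t1 + x1, t2 + x2, tz + z + t1 * x2)"

fun heis_move :: "heis \<Rightarrow> gen2 \<times> bool \<Rightarrow> heis" where
  "heis_move (x1, x2, z) (X1, True) = (x1 + 1, x2, z)"
| "heis_move (x1, x2, z) (X1, False) = (x1 - 1, x2, z)"
| "heis_move (x1, x2, z) (X2, True) = (x1, x2 + 1, z + x1)"
| "heis_move (x1, x2, z) (X2, False) = (x1, x2 - 1, z - x1)"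

definition heis_word :: "heis \<Rightarrow> gen2 word \<Rightarrow> heis" where
  "heis_word h w = foldl heis_move h w"

lemma heis_move_inverse [simp]: "heis_move (heis_move h (g, b)) (g, \<not> b) = h"
  by (cases h; cases g; cases b) auto

lemma heis_move_mul: "heis_move (heis_mul t h) g = heis_mul t (heis_move h g)"
  by (cases t; cases h; cases g; cases "fst g"; cases "snd g") (auto simp: algebra_simps)

lemma heis_word_simps [simp]:
  "heis_word h [] = h"
  "heis_word h (x # xs) = heis_word (heis_move h x) xs"
  "heis_word h (xs @ ys) = heis_word (heis_word h xs) ys"
  by (simp_all add: heis_word_def)

lemma heis_word_free_eq: "free_eq x y \<Longrightarrow> heis_word h x = heis_word h y"
  by (rule free_eq_invariant[where f = "heis_word h"]) simp

lemma expsum_simps [simp]: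
  "expsum i [] = 0"
  "expsum i (x # xs) = (if fst x = i then (if snd x then 1 else -1) else 0) + expsum i xs"
  "expsum i (xs @ ys) = expsum i xs + expsum i ys"
  by (auto simp: expsum_def split: prod.splits)

lemma expsum_winv [simp]: "expsum i (winv x) = - expsum i x"
  by (induction x) auto

lemma heis_word_abel:
  "fst (heis_word h w) = fst h + expsum X1 w \<and> fst (snd (heis_word h w)) = fst (snd h) + expsum X2 w"
proof (induction w arbitrary: h)
  case (Cons a w)
  obtain x1 x2 z where "h = (x1, x2, z)" by (cases h)
  moreover obtain g b where "a = (g, b)" by (cases a)
  ultimately show ?case
    using Cons.IH[of "heis_move h a"] by (cases g; cases b) auto
qed simp

datatype factor = Fa | Fb | Fc

type_synonym pos = "heis \<times> heis \<times> heis"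
type_synonym step = "factor \<times> gen2 \<times> bool"

fun pos_comp :: "pos \<Rightarrow> factor \<Rightarrow> heis" where
  "pos_comp (pa, pb, pc) Fa = pa"
| "pos_comp (pa, pb, pc) Fb = pb"
| "pos_comp (pa, pb, pc) Fc = pc"

fun pos_move :: "pos \<Rightarrow> step \<Rightarrow> pos" where
  "pos_move (pa, pb, pc) (Fa, g) = (heis_move pa g, pb, pc)"
| "pos_move (pa, pb, pc) (Fb, g) = (pa, heis_move pb g, pc)"
| "pos_move (pa, pb, pc) (Fc, g) = (pa, pb, heis_move pc g)"

definition path_end :: "pos \<Rightarrow> step list \<Rightarrow> pos" where
  "path_end p ss = foldl pos_move p ss"

fun step_inv :: "step \<Rightarrow> step" where
  "step_inv (c, g, b) = (c, g, \<not> b)"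

definition path_inv :: "step list \<Rightarrow> step list" where
  "path_inv ss = rev (map step_inv ss)"

definition comp_word :: "factor \<Rightarrow> step list \<Rightarrow> gen2 word" where
  "comp_word c ss = map snd (filter (\<lambda>s. fst s = c) ss)"

fun pos_mul :: "pos \<Rightarrow> pos \<Rightarrow> pos" where
  "pos_mul (ta, tb, tc) (pa, pb, pc) = (heis_mul ta pa, heis_mul tb pb, heis_mul tc pc)"

fun abel_total :: "pos \<Rightarrow> int \<times> int" where
  "abel_total ((a1, a2, _), (b1, b2, _), (c1, c2, _)) = (a1 + b1 + c1, a2 + b2 + c2)"

definition origin :: pos where
  "origin = ((0, 0, 0), (0, 0, 0), (0, 0, 0))"

lemma pos_move_inverse [simp]: "pos_move (pos_move p s) (step_inv s) = p"
  by (cases p; cases s; cases "fst s") auto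

lemma pos_move_comm: "fst s \<noteq> fst t \<Longrightarrow> pos_move (pos_move p s) t = pos_move (pos_move p t) s"
  by (cases p; cases s; cases t; cases "fst s"; cases "fst t") auto

lemma pos_move_mul: "pos_move (pos_mul t p) s = pos_mul t (pos_move p s)"
  by (cases t; cases p; cases s; cases "fst s") (auto simp del: heis_mul.simps simp: heis_move_mul)

lemma path_end_simps [simp]:
  "path_end p [] = p"
  "path_end p (s # ss) = path_end (pos_move p s) ss"
  "path_end p (xs @ ys) = path_end (path_end p xs) ys"
  by (simp_all add: path_end_def)

lemma step_inv_step_inv [simp]: "step_inv (step_inv s) = s"
  by (cases s) auto

lemma path_inv_simps [simp]:
  "path_inv [] = []"
  "path_inv (s # ss) = path_inv ss @ [step_inv s]"
  "path_inv (xs @ ys) = path_inv ys @ path_inv xs"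
  by (simp_all add: path_inv_def)

lemma path_inv_path_inv [simp]: "path_inv (path_inv ss) = ss"
  by (induction ss) auto

lemma path_end_path_inv [simp]: "path_end (path_end p ss) (path_inv ss) = p"
  by (induction ss arbitrary: p) auto

lemma comp_word_simps [simp]:
  "comp_word c [] = []"
  "comp_word c (s # ss) = (if fst s = c then snd s # comp_word c ss else comp_word c ss)"
  "comp_word c (xs @ ys) = comp_word c xs @ comp_word c ys"
  by (simp_all add: comp_word_def)

lemma filter_factor_eq: "filter (\<lambda>s. fst s = c) ss = map (Pair c) (comp_word c ss)"
  by (induction ss) auto

lemma comp_word_map_Pair: "comp_word c (map (Pair d) x) = (if c = d then x else [])"
  by (induction x) auto

lemma comp_word_path_inv: "comp_word c (path_inv ss) = winv (comp_word c ss)"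
proof (induction ss)
  case (Cons s ss)
  then show ?case by (cases s) auto
qed simp

lemma pos_comp_path_end: "pos_comp (path_end p ss) c = heis_word (pos_comp p c) (comp_word c ss)"
proof (induction ss arbitrary: p)
  case (Cons s ss)
  have "pos_comp (pos_move p s) c = (if fst s = c then heis_move (pos_comp p c) (snd s) else pos_comp p c)"
    by (cases p; cases s; cases c; cases "fst s") auto
  then show ?case using Cons by simp
qed simp

lemma pos_eqI: "(\<And>c. pos_comp p c = pos_comp q c) \<Longrightarrow> p = q"
  by (cases p; cases q) (metis pos_comp.simps)

lemma path_end_cong:
  assumes "\<And>c. free_eq (comp_word c ss) (comp_word c tt)"
  shows "path_end p ss = path_end p tt"
  by (rule pos_eqI) (simp add: pos_comp_path_end heis_word_free_eq[OF assms])

definition null_path :: "step list \<Rightarrow> bool" where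
  "null_path ss \<longleftrightarrow> (\<forall>c. free_eq (comp_word c ss) [])"

lemma path_end_null_path: "null_path ss \<Longrightarrow> path_end p ss = p"
  using path_end_cong[of ss "[]" p] unfolding null_path_def by simp

lemma null_path_path_inv: "null_path ss \<Longrightarrow> null_path (path_inv ss)"
  unfolding null_path_def comp_word_path_inv using free_eq_winv by fastforce

lemma pos_comp_origin: "pos_comp origin c = (0, 0, 0)"
  by (cases c) (simp_all add: origin_def)

lemma abel_total_pos_comp: "abel_total p =
    (fst (pos_comp p Fa) + fst (pos_comp p Fb) + fst (pos_comp p Fc),
     fst (snd (pos_comp p Fa)) + fst (snd (pos_comp p Fb)) + fst (snd (pos_comp p Fc)))"
  by (cases p) auto

lemma pos_mul_origin [simp]: "pos_mul t origin = t"
proof -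
  have "heis_mul h (0, 0, 0) = h" for h
    by (cases h) simp
  then show ?thesis
    by (cases t) (simp add: origin_def)
qed

lemma abel_total_pos_mul: "abel_total t = (0, 0) \<Longrightarrow> abel_total (pos_mul t p) = abel_total p"
  by (cases t; cases p) auto

section \<open>Line integrals of 1-forms\<close>

type_synonym form = "pos \<Rightarrow> factor \<Rightarrow> gen2 \<Rightarrow> int"

fun form_step :: "form \<Rightarrow> pos \<Rightarrow> step \<Rightarrow> int" where
  "form_step e p (c, g, True) = e p c g"
| "form_step e p (c, g, False) = - e (pos_move p (c, g, False)) c g"

fun line_int :: "form \<Rightarrow> pos \<Rightarrow> step list \<Rightarrow> int" where
  "line_int e p [] = 0"
| "line_int e p (s # ss) = form_step e p s + line_int e (pos_move p s) ss"

text \<open>Closedness is only asked of squares spanned by two different factors; paths inside one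
  factor are compared up to free reduction instead.\<close>

definition closed_form :: "form \<Rightarrow> bool" where
  "closed_form e \<longleftrightarrow> (\<forall>p c d g g'. c \<noteq> d \<longrightarrow>
     e p c g + e (pos_move p (c, g, True)) d g' = e p d g' + e (pos_move p (d, g', True)) c g)"

lemma line_int_append [simp]:
  "line_int e p (xs @ ys) = line_int e p xs + line_int e (path_end p xs) ys"
  by (induction xs arbitrary: p) auto

lemma form_step_inv_cancel: "form_step e p s + form_step e (pos_move p s) (step_inv s) = 0"
proof -
  obtain c g b where s: "s = (c, g, b)" by (cases s) auto
  show ?thesis
  proof (cases b)
    case True
    then show ?thesis using s pos_move_inverse[of p s] by simp
  qed (use s in simp)
qed

lemma line_int_path_inv: "line_int e (path_end p ss) (path_inv ss) = - line_int e p ss"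
proof (induction ss arbitrary: p)
  case (Cons s ss)
  then show ?case using form_step_inv_cancel[of e p s] by simp
qed simp

lemma form_step_square:
  assumes e: "closed_form e" and cd: "fst s \<noteq> fst t"
  shows "form_step e p s + form_step e (pos_move p s) t = form_step e p t + form_step e (pos_move p t) s"
proof -
  obtain c g b where s: "s = (c, g, b)" by (cases s) auto
  obtain d g' b' where t: "t = (d, g', b')" by (cases t) auto
  have "c \<noteq> d" using cd s t by simp
  then have sq: "\<And>q. e q c g + e (pos_move q (c, g, True)) d g' = e q d g' + e (pos_move q (d, g', True)) c g"
    and comm: "\<And>q x y. pos_move (pos_move q (c, x)) (d, y) = pos_move (pos_move q (d, y)) (c, x)"
    using e pos_move_comm unfolding closed_form_def by (metis, simp)
  have undo: "\<And>q c g. pos_move (pos_move q (c, g, False)) (c, g, True) = q"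
    using pos_move_inverse[of _ "(_, _, False)"] by simp
  show ?thesis
  proof (cases b; cases b')
    assume "b" "b'"
    then show ?thesis using s t sq[of p] by simp
  next
    assume "b" "\<not> b'"
    then show ?thesis
      using s t sq[of "pos_move p (d, g', False)"] comm undo by (simp add: algebra_simps)
  next
    assume "\<not> b" "b'"
    then show ?thesis
      using s t sq[of "pos_move p (c, g, False)"] comm undo by (simp add: algebra_simps)
  next
    assume "\<not> b" "\<not> b'"
    then show ?thesis
      using s t sq[of "pos_move (pos_move p (c, g, False)) (d, g', False)"] comm undo
      by (simp add: algebra_simps)
  qed
qed

lemma line_int_swap:
  assumes e: "closed_form e" and "\<forall>t\<in>set ts. fst t \<noteq> fst s"
  shows "line_int e p (s # ts) = line_int e p (ts @ [s])"
  using assms(2)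
proof (induction ts arbitrary: p)
  case (Cons t ts)
  then have "fst s \<noteq> fst t" by auto
  then have "line_int e p (s # t # ts)
      = form_step e p t + (form_step e (pos_move p t) s + line_int e (pos_move (pos_move p t) s) ts)"
    using form_step_square[OF e, of s t p] pos_move_comm[of s t p] by simp
  also have "\<dots> = line_int e p ((t # ts) @ [s])"
    using Cons by simp
  finally show ?case .
qed simp

lemma path_end_swap:
  assumes "\<forall>t\<in>set ts. fst t \<noteq> fst s"
  shows "path_end p (s # ts) = path_end p (ts @ [s])"
  using assms
proof (induction ts arbitrary: p)
  case (Cons t ts)
  then have "pos_move (pos_move p s) t = pos_move (pos_move p t) s"
    using pos_move_comm[of s t p] by auto
  then show ?case using Cons by simp
qed simp

lemma line_int_partition:
  assumes e: "closed_form e"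
  shows "line_int e p ss = line_int e p (filter (\<lambda>s. P (fst s)) ss @ filter (\<lambda>s. \<not> P (fst s)) ss)"
proof (induction ss arbitrary: p)
  case (Cons s ss)
  let ?A = "filter (\<lambda>s. P (fst s)) ss" and ?B = "filter (\<lambda>s. \<not> P (fst s)) ss"
  show ?case
  proof (cases "P (fst s)")
    case False
    then have "\<forall>t\<in>set ?A. fst t \<noteq> fst s" by auto
    then have "line_int e p (s # ?A) = line_int e p (?A @ [s])"
      and "path_end p (s # ?A) = path_end p (?A @ [s])"
      using line_int_swap[OF e] path_end_swap by blast+
    moreover have "line_int e p (s # ss) = line_int e p (s # ?A) + line_int e (path_end p (s # ?A)) ?B"
      using Cons[of "pos_move p s"] by simp
    ultimately show ?thesis
      using False by simp
  qed (use Cons[of "pos_move p s"] in simp)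
qed simp

lemma line_int_sorted:
  assumes e: "closed_form e"
  shows "line_int e p ss = line_int e p
    (map (Pair Fa) (comp_word Fa ss) @ map (Pair Fb) (comp_word Fb ss) @ map (Pair Fc) (comp_word Fc ss))"
proof -
  let ?R = "filter (\<lambda>s. fst s \<noteq> Fa) ss"
  have Fc: "(c \<noteq> Fa \<and> c \<noteq> Fb) = (c = Fc)" for c
    by (cases c) auto
  have "filter (\<lambda>s. fst s = Fb) ?R = map (Pair Fb) (comp_word Fb ss)"
    unfolding filter_filter filter_factor_eq[symmetric] by (rule filter_cong) auto
  moreover have "filter (\<lambda>s. fst s \<noteq> Fb) ?R = map (Pair Fc) (comp_word Fc ss)"
    unfolding filter_filter filter_factor_eq[symmetric] by (rule filter_cong) (simp_all add: Fc)
  ultimately show ?thesis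
    using line_int_partition[OF e, of p ss "\<lambda>c. c = Fa"]
      line_int_partition[OF e, of _ ?R "\<lambda>c. c = Fb"]
    by (simp add: filter_factor_eq)
qed

lemma line_int_free_eq:
  assumes "free_eq u v"
  shows "line_int e p (map (Pair c) u) = line_int e p (map (Pair c) v)"
proof (rule free_eq_invariant[OF _ assms])
  fix u w g b
  have "form_step e p' (c, g, b) + form_step e (pos_move p' (c, g, b)) (c, g, \<not> b) = 0" for p'
    using form_step_inv_cancel[of e p' "(c, g, b)"] by simp
  moreover have "pos_move (pos_move p' (c, g, b)) (c, g, \<not> b) = p'" for p'
    using pos_move_inverse[of p' "(c, g, b)"] by simp
  ultimately show "line_int e p (map (Pair c) (u @ [(g, b), (g, \<not> b)] @ w))
      = line_int e p (map (Pair c) (u @ w))"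
    by simp
qed

lemma line_int_indep:
  assumes e: "closed_form e" and fe: "\<And>c. free_eq (comp_word c ss) (comp_word c tt)"
  shows "line_int e p ss = line_int e p tt"
proof -
  have "line_int e q (map (Pair c) (comp_word c ss)) = line_int e q (map (Pair c) (comp_word c tt))"
    and "path_end q (map (Pair c) (comp_word c ss)) = path_end q (map (Pair c) (comp_word c tt))"
    for q c
    using line_int_free_eq[OF fe] path_end_cong fe by (auto simp: comp_word_map_Pair)
  then show ?thesis
    using line_int_sorted[OF e, of p ss] line_int_sorted[OF e, of p tt] by simp
qed

lemma line_int_translate: "line_int e (pos_mul t p) ss = line_int (\<lambda>q. e (pos_mul t q)) p ss"
proof (induction ss arbitrary: p)
  case (Cons s ss)
  have "form_step e (pos_mul t p) s = form_step (\<lambda>q. e (pos_mul t q)) p s"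
    by (cases s; cases "snd (snd s)") (auto simp: pos_move_mul)
  then show ?case
    using Cons by (simp add: pos_move_mul)
qed simp

lemma line_int_diff:
  "line_int (\<lambda>q c g. e1 q c g - e2 q c g) p ss = line_int e1 p ss - line_int e2 p ss"
proof (induction ss arbitrary: p)
  case (Cons s ss)
  then show ?case
    by (cases s; cases "snd (snd s)") auto
qed simp

definition eta :: form where
  "eta p f g = (case p of ((a1, a2, A), (b1, b2, B), (c1, c2, C)) \<Rightarrow>
     (case (f, g) of
       (Fa, X2) \<Rightarrow> -2*a1*a2*c1 - a1*a1*b2
     | (Fb, X2) \<Rightarrow> 2*b1*b2*c1 - A + 2*A*c1 + 2*A*b1 - a2*c1 + a2*c1*c1 - a2*b1 + 2*a2*b1*c1
          + a2*b1*b1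
     | (Fc, X1) \<Rightarrow> -2*B*c2 - b1*c2 + b1*c2*c2 - b1*b2 + 2*b1*b2*c2 + b1*b2*b2 + 2*A*c2 + 2*A*b2
          - a2*c1 + 2*a2*c1*c2 + 2*a2*b2*c1 - a2*b1 + 2*a2*b1*c2 + 2*a2*b1*b2 + a2*a2*c1
          + a2*a2*b1
     | _ \<Rightarrow> 0))"

definition eta_curl :: "int \<times> int \<Rightarrow> factor \<Rightarrow> gen2 \<Rightarrow> factor \<Rightarrow> gen2 \<Rightarrow> int" where
  "eta_curl h c g d g' = (case h of (h1, h2) \<Rightarrow> (case (c, g, d, g') of
      (Fa, X2, Fb, X2) \<Rightarrow> h1 * (h1 - 1) | (Fb, X2, Fa, X2) \<Rightarrow> - (h1 * (h1 - 1))
    | (Fa, X2, Fc, X1) \<Rightarrow> 2 * h1 * h2 | (Fc, X1, Fa, X2) \<Rightarrow> - (2 * h1 * h2)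
    | (Fb, X1, Fc, X1) \<Rightarrow> h2 * (h2 - 1) | (Fc, X1, Fb, X1) \<Rightarrow> - (h2 * (h2 - 1))
    | _ \<Rightarrow> 0))"

lemma curl_eta:
  assumes "c \<noteq> d"
  shows "eta p c g + eta (pos_move p (c, g, True)) d g' - eta p d g' - eta (pos_move p (d, g', True)) c g
    = eta_curl (abel_total p) c g d g'"
proof -
  obtain a1 a2 A b1 b2 B c1 c2 C where p: "p = ((a1, a2, A), (b1, b2, B), (c1, c2, C))"
    by (cases p) auto
  show ?thesis
    using assms unfolding p
    by (cases c; cases d; cases g; cases g') (simp_all add: eta_def eta_curl_def algebra_simps)
qed

definition eta_shift :: "pos \<Rightarrow> form" where
  "eta_shift t = (\<lambda>q c g. eta (pos_mul t q) c g - eta q c g)"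

lemma closed_eta_shift:
  assumes "abel_total t = (0, 0)"
  shows "closed_form (eta_shift t)"
  unfolding closed_form_def eta_shift_def
proof (intro allI impI)
  fix p c d g g'
  assume "(c :: factor) \<noteq> d"
  then show "eta (pos_mul t p) c g - eta p c g
      + (eta (pos_mul t (pos_move p (c, g, True))) d g' - eta (pos_move p (c, g, True)) d g')
    = eta (pos_mul t p) d g' - eta p d g'
      + (eta (pos_mul t (pos_move p (d, g', True))) c g - eta (pos_move p (d, g', True)) c g)"
    using curl_eta[of c d "pos_mul t p" g g'] curl_eta[of c d p g g']
      abel_total_pos_mul[OF assms, of p]
    by (simp add: pos_move_mul)
qed

lemma line_int_eta_shift:
  "line_int eta (pos_mul t p) ss - line_int eta p ss = line_int (eta_shift t) p ss"
  unfolding eta_shift_def by (simp add: line_int_translate line_int_diff)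

lemma line_int_eta_translate:
  assumes "abel_total t = (0, 0)" and "null_path ss"
  shows "line_int eta (pos_mul t p) ss = line_int eta p ss"
proof -
  have "line_int (eta_shift t) p ss = line_int (eta_shift t) p []"
    using assms unfolding null_path_def
    by (intro line_int_indep closed_eta_shift) simp_all
  then show ?thesis
    using line_int_eta_shift[of t p ss] by simp
qed

fun triple_comp :: "factor \<Rightarrow> triple \<Rightarrow> gen2 word" where
  "triple_comp Fa (x, y, z) = x"
| "triple_comp Fb (x, y, z) = y"
| "triple_comp Fc (x, y, z) = z"

definition gen_path :: "('s \<Rightarrow> triple) \<Rightarrow> 's \<times> bool \<Rightarrow> step list" where
  "gen_path \<phi> sb = (case sb of (s, b) \<Rightarrow> (case \<phi> s of (x, y, z) \<Rightarrow>
     (if b then map (Pair Fa) x @ map (Pair Fb) y @ map (Pair Fc) z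
      else path_inv (map (Pair Fa) x @ map (Pair Fb) y @ map (Pair Fc) z))))"

definition word_path :: "('s \<Rightarrow> triple) \<Rightarrow> 's word \<Rightarrow> step list" where
  "word_path \<phi> w = concat (map (gen_path \<phi>) w)"

lemma word_path_simps [simp]:
  "word_path \<phi> [] = []"
  "word_path \<phi> (x # w) = gen_path \<phi> x @ word_path \<phi> w"
  "word_path \<phi> (v @ w) = word_path \<phi> v @ word_path \<phi> w"
  by (simp_all add: word_path_def)

lemma gen_path_inv: "gen_path \<phi> (s, \<not> b) = path_inv (gen_path \<phi> (s, b))"
  by (cases b; cases "\<phi> s") (simp_all add: gen_path_def)

lemma word_path_winv: "word_path \<phi> (winv w) = path_inv (word_path \<phi> w)"
proof (induction w)
  case (Cons a w)
  then show ?case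
    using gen_path_inv[of \<phi> "fst a" "snd a"] by simp
qed simp

lemma teval_simps [simp]:
  "teval \<phi> [] = ([], [], [])"
  "teval \<phi> ((s, b) # w) = tmul (if b then \<phi> s else tinv (\<phi> s)) (teval \<phi> w)"
  by (simp_all add: teval_def)

lemma comp_word_word_path: "comp_word c (word_path \<phi> w) = triple_comp c (teval \<phi> w)"
proof (induction w)
  case Nil
  then show ?case by (cases c) simp_all
next
  case (Cons a w)
  obtain s b where a: "a = (s, b)" by (cases a)
  have "comp_word c (gen_path \<phi> (s, True)) = triple_comp c (\<phi> s)"
    by (cases "\<phi> s"; cases c) (simp_all add: gen_path_def comp_word_map_Pair)
  moreover have "triple_comp c (tmul t t') = triple_comp c t @ triple_comp c t'"
    and "triple_comp c (tinv t) = winv (triple_comp c t)" for t t'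
    by (cases t; cases t'; cases c; simp add: tmul_def tinv_def)+
  ultimately show ?case
    using Cons gen_path_inv[of \<phi> s True] unfolding a
    by (cases b) (simp_all add: comp_word_path_inv)
qed

lemma teq_iff_triple_comp: "teq t t' \<longleftrightarrow> (\<forall>c. free_eq (triple_comp c t) (triple_comp c t'))"
proof -
  have "(\<forall>c. P c) \<longleftrightarrow> P Fa \<and> P Fb \<and> P Fc" for P
    by (metis factor.exhaust)
  then show ?thesis
    by (cases t; cases t') (simp add: teq_def)
qed

lemma null_path_word_path_iff: "null_path (word_path \<phi> w) \<longleftrightarrow> teq (teval \<phi> w) ([], [], [])"
proof -
  have "triple_comp c ([], [], []) = []" for c
    by (cases c) simp_all
  then show ?thesis
    unfolding null_path_def teq_iff_triple_comp comp_word_word_path by simp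
qed

lemma abel_total_word_path:
  assumes K: "\<forall>s\<in>S. inK (\<phi> s)" and w: "letters w \<subseteq> S"
  shows "abel_total (path_end origin (word_path \<phi> w)) = (0, 0)"
proof -
  have "expsum i (comp_word Fa (word_path \<phi> w)) + expsum i (comp_word Fb (word_path \<phi> w))
      + expsum i (comp_word Fc (word_path \<phi> w)) = 0" for i
    using w
  proof (induction w)
    case (Cons a w)
    obtain s b where a: "a = (s, b)" by (cases a)
    obtain x y z where \<phi>s: "\<phi> s = (x, y, z)" by (cases "\<phi> s")
    have "s \<in> S" and "letters w \<subseteq> S"
      using Cons.prems a by (auto simp: letters_def)
    moreover from this(1) have "expsum i x + expsum i y + expsum i z = 0"
      using K \<phi>s by (auto simp: inK_def)
    ultimately show ?case
      using Cons.IH \<phi>s unfolding a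
      by (cases b) (simp_all add: gen_path_def comp_word_path_inv comp_word_map_Pair)
  qed simp
  then show ?thesis
    unfolding abel_total_pos_comp pos_comp_path_end pos_comp_origin
    using heis_word_abel[of "(0, 0, 0)"] by simp
qed

lemma line_int_word_path_free_eq:
  assumes "free_eq w w'"
  shows "line_int e p (word_path \<phi> w) = line_int e p (word_path \<phi> w')"
proof (rule free_eq_invariant[where f = "\<lambda>w. line_int e p (word_path \<phi> w)", OF _ assms])
  fix u v s b
  let ?g = "gen_path \<phi> (s, b)"
  have "word_path \<phi> (u @ [(s, b), (s, \<not> b)] @ v) = word_path \<phi> u @ ?g @ path_inv ?g @ word_path \<phi> v"
    using gen_path_inv[of \<phi> s b] by simp
  then show "line_int e p (word_path \<phi> (u @ [(s, b), (s, \<not> b)] @ v)) = line_int e p (word_path \<phi> (u @ v))"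
    using line_int_path_inv[of e "path_end p (word_path \<phi> u)" ?g] by simp
qed

definition eta_integral :: "('s \<Rightarrow> triple) \<Rightarrow> 's word \<Rightarrow> int" where
  "eta_integral \<phi> w = line_int eta origin (word_path \<phi> w)"

lemma eta_integral_prod_conj:
  assumes K: "\<forall>s\<in>S. inK (\<phi> s)" and R: "\<forall>r\<in>R. null_path (word_path \<phi> r)"
    and "\<forall>(u, r, e) \<in> set cs. r \<in> R \<and> letters u \<subseteq> S"
  shows "eta_integral \<phi> (prod_conj cs)
      = (\<Sum>(u, r, e)\<leftarrow>cs. if e then eta_integral \<phi> r else - eta_integral \<phi> r)
    \<and> path_end origin (word_path \<phi> (prod_conj cs)) = origin"
  using assms(3)
proof (induction cs)
  case Nil
  then show ?case by (simp add: prod_conj_def eta_integral_def)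
next
  case (Cons a cs)
  obtain u r e where a: "a = (u, r, e)" by (cases a)
  have "r \<in> R" and u: "letters u \<subseteq> S"
    using Cons.prems a by auto
  define \<rho> where "\<rho> = word_path \<phi> (if e then r else winv r)"
  have "null_path (word_path \<phi> r)"
    using R \<open>r \<in> R\<close> by blast
  then have \<rho>_null: "null_path \<rho>" and
    \<rho>_int: "line_int eta origin \<rho> = (if e then eta_integral \<phi> r else - eta_integral \<phi> r)"
    using line_int_path_inv[of eta origin "word_path \<phi> r"]
    by (auto simp: \<rho>_def word_path_winv eta_integral_def null_path_path_inv path_end_null_path)
  define q where "q = path_end origin (word_path \<phi> u)"
  have "line_int eta q \<rho> = line_int eta origin \<rho>"
    using line_int_eta_translate[OF abel_total_word_path[OF K u] \<rho>_null, of origin]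
    by (simp add: q_def)
  moreover have "path_end q \<rho> = q"
    using \<rho>_null by (rule path_end_null_path)
  moreover have "prod_conj (a # cs) = u @ (if e then r else winv r) @ winv u @ prod_conj cs"
    using a by (simp add: prod_conj_def)
  ultimately show ?case
    using Cons line_int_path_inv[of eta origin "word_path \<phi> u"] \<rho>_int a
    by (simp add: eta_integral_def word_path_winv q_def \<rho>_def[symmetric])
qed

lemma abs_sum_list_le:
  fixes f :: "'a \<Rightarrow> 'b :: linordered_idom"
  assumes "\<forall>x\<in>set xs. \<bar>f x\<bar> \<le> M"
  shows "\<bar>\<Sum>x\<leftarrow>xs. f x\<bar> \<le> of_nat (length xs) * M"
  using assms
proof (induction xs)
  case (Cons x xs)
  then have "\<bar>f x + (\<Sum>x\<leftarrow>xs. f x)\<bar> \<le> M + of_nat (length xs) * M"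
    by (meson abs_triangle_ineq add_mono list.set_intros order_trans)
  then show ?case by (simp add: algebra_simps)
qed simp

lemma abs_eta_integral_le_area:
  assumes K: "\<forall>s\<in>S. inK (\<phi> s)" and R: "\<forall>r\<in>R. null_path (word_path \<phi> r)"
    and "finite R" and "null_pres S R w"
  shows "\<bar>eta_integral \<phi> w\<bar> \<le> int (area S R w) * (\<Sum>r\<in>R. \<bar>eta_integral \<phi> r\<bar>)"
proof -
  let ?M = "\<Sum>r\<in>R. \<bar>eta_integral \<phi> r\<bar>"
  obtain cs where len: "length cs = area S R w" and "area_witness S R w cs"
    using LeastI_ex[of "\<lambda>n. \<exists>cs. length cs = n \<and> area_witness S R w cs"] assms(4)
    unfolding area_def null_pres_def by blast
  then have cs: "\<forall>(u, r, e) \<in> set cs. r \<in> R \<and> letters u \<subseteq> S" and "free_eq (prod_conj cs) w"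
    by (auto simp: area_witness_def)
  then have "eta_integral \<phi> w = eta_integral \<phi> (prod_conj cs)"
    unfolding eta_integral_def by (simp add: line_int_word_path_free_eq)
  also have "\<dots> = (\<Sum>(u, r, e)\<leftarrow>cs. if e then eta_integral \<phi> r else - eta_integral \<phi> r)"
    using eta_integral_prod_conj[OF K R cs] by blast
  finally have sum: "eta_integral \<phi> w = \<dots>" .
  have "\<bar>eta_integral \<phi> r\<bar> \<le> ?M" if "r \<in> R" for r
    using member_le_sum[OF that _ \<open>finite R\<close>, of "\<lambda>r. \<bar>eta_integral \<phi> r\<bar>"] by simp
  then have "\<forall>x\<in>set cs. \<bar>case x of (u, r, e) \<Rightarrow> if e then eta_integral \<phi> r else - eta_integral \<phi> r\<bar> \<le> ?M"
    using cs by auto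
  then show ?thesis
    unfolding sum len[symmetric] by (rule abs_sum_list_le)
qed

section \<open>Words with eta integral 2 n^4\<close>

definition commutator_word :: "nat \<Rightarrow> gen2 word" where
  "commutator_word n = comm (replicate n (X1, True)) (replicate n (X2, True))"

lemma commutator_word_replicate: "commutator_word n
    = replicate n (X1, True) @ replicate n (X2, True) @ replicate n (X1, False) @ replicate n (X2, False)"
  by (simp add: commutator_word_def comm_def winv_replicate)

lemma heis_word_replicate_X1:
  "heis_word (x1, x2, z) (replicate n (X1, b)) = (x1 + (if b then int n else - int n), x2, z)"
  by (induction n arbitrary: x1) (auto simp: algebra_simps)

lemma heis_word_replicate_X2: "heis_word (x1, x2, z) (replicate n (X2, b))
    = (x1, x2 + (if b then int n else - int n), z + (if b then int n * x1 else - int n * x1))"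
  by (induction n arbitrary: x2 z) (auto simp: algebra_simps)

lemma heis_word_commutator_word:
  "heis_word (x1, x2, z) (commutator_word n) = (x1, x2, z + int n * int n)"
  by (simp add: commutator_word_replicate heis_word_replicate_X1 heis_word_replicate_X2 algebra_simps)

lemma path_end_map_Pair_Fa: "path_end (pa, pb, pc) (map (Pair Fa) w) = (heis_word pa w, pb, pc)"
  by (induction w arbitrary: pa) auto

lemma path_end_map_Pair_Fb: "path_end (pa, pb, pc) (map (Pair Fb) w) = (pa, heis_word pb w, pc)"
  by (induction w arbitrary: pb) auto

lemma eta_shift_central_Fa:
  "eta_shift ((0, 0, N), (0, 0, 0), (0, 0, 0)) ((a1, a2, A), (b1, b2, B), (c1, c2, C)) c g =
    (case (c, g) of (Fb, X2) \<Rightarrow> N * (2 * b1 + 2 * c1 - 1) | (Fc, X1) \<Rightarrow> 2 * N * (c2 + b2) | _ \<Rightarrow> 0)"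
  by (cases c; cases g) (simp_all add: eta_shift_def eta_def algebra_simps)

lemma eta_shift_central_Fb: "eta_shift ((0, 0, 0), (0, 0, N), (0, 0, 0)) q Fa g = 0"
  by (cases q; cases g) (auto simp: eta_shift_def eta_def)

lemma line_int_eta_shift_X1:
  "line_int (eta_shift ((0, 0, N), (0, 0, 0), (0, 0, 0))) (pa, (x1, x2, z), (c1, c2, C))
     (map (Pair Fb) (replicate n (X1, b))) = 0"
proof (induction n arbitrary: x1)
  case (Suc n)
  then show ?case
    by (cases pa; cases b) (simp_all add: eta_shift_central_Fa del: map_replicate)
qed simp

lemma line_int_eta_shift_X2:
  "line_int (eta_shift ((0, 0, N), (0, 0, 0), (0, 0, 0))) (pa, (x1, x2, z), (c1, c2, C))
     (map (Pair Fb) (replicate n (X2, b))) = (if b then 1 else -1) * int n * N * (2 * x1 + 2 * c1 - 1)"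
proof (induction n arbitrary: x2 z)
  case (Suc n)
  then show ?case
    by (cases pa; cases b) (simp_all add: eta_shift_central_Fa algebra_simps del: map_replicate)
qed simp

lemma line_int_eta_shift_commutator_word:
  "line_int (eta_shift ((0, 0, int n * int n), (0, 0, 0), (0, 0, 0))) origin
     (map (Pair Fb) (commutator_word n)) = 2 * int n ^ 4"
  by (simp add: commutator_word_replicate origin_def line_int_eta_shift_X1 line_int_eta_shift_X2
      path_end_map_Pair_Fb heis_word_replicate_X1 heis_word_replicate_X2 power4_eq_xxxx algebra_simps
      del: map_replicate)

lemma line_int_vanishing_factor:
  assumes "\<And>q g. e q c g = 0"
  shows "line_int e p (map (Pair c) w) = 0"
proof (induction w arbitrary: p)
  case (Cons a w)
  then show ?case
    using assms by (cases a; cases "snd a") simp_all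
qed simp

lemma line_int_eta_commutator:
  assumes U: "\<And>c. free_eq (comp_word c PU) (comp_word c (map (Pair Fa) (commutator_word n)))"
    and V: "\<And>c. free_eq (comp_word c PV) (comp_word c (map (Pair Fb) (commutator_word n)))"
  shows "line_int eta origin (PU @ PV @ path_inv PU @ path_inv PV) = 2 * int n ^ 4"
proof -
  define N where "N = int n * int n"
  define eU :: pos where "eU = ((0, 0, N), (0, 0, 0), (0, 0, 0))"
  define eV :: pos where "eV = ((0, 0, 0), (0, 0, N), (0, 0, 0))"
  have eU: "path_end origin PU = eU" and eV: "path_end origin PV = eV"
    and eUV: "path_end eU PV = path_end eV PU"
    using path_end_cong[OF U] path_end_cong[OF V]
    by (simp_all add: origin_def eU_def eV_def N_def path_end_map_Pair_Fa path_end_map_Pair_Fb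
        heis_word_commutator_word)
  have "line_int eta origin (PU @ PV @ path_inv PU @ path_inv PV)
      = (line_int eta eU PV - line_int eta origin PV) - (line_int eta eV PU - line_int eta origin PU)"
    using line_int_path_inv[of eta eV PU] line_int_path_inv[of eta origin PV] eU eV eUV by simp
  also have "\<dots> = line_int (eta_shift eU) origin PV - line_int (eta_shift eV) origin PU"
    using line_int_eta_shift[of eU origin] line_int_eta_shift[of eV origin] by simp
  also have "\<dots> = line_int (eta_shift eU) origin (map (Pair Fb) (commutator_word n))
      - line_int (eta_shift eV) origin (map (Pair Fa) (commutator_word n))"
    using line_int_indep[OF closed_eta_shift U] line_int_indep[OF closed_eta_shift V]
    by (simp add: eU_def eV_def)
  also have "\<dots> = 2 * int n ^ 4"
    using line_int_eta_shift_commutator_word line_int_vanishing_factor[of "eta_shift eV"]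
      eta_shift_central_Fb
    by (simp add: eU_def eV_def N_def)
  finally show ?thesis .
qed

lemma comp_word_word_path_comm:
  "comp_word c (word_path \<phi> (comm x y))
    = comm (comp_word c (word_path \<phi> x)) (comp_word c (word_path \<phi> y))"
  by (simp add: comm_def word_path_winv comp_word_path_inv)

lemma comp_word_word_path_comm_wpow:
  assumes "teq (teval \<phi> x) t" and "teq (teval \<phi> y) t'"
  shows "free_eq (comp_word c (word_path \<phi> (comm (wpow x n) (wpow y n))))
    (comm (wpow (triple_comp c t) n) (wpow (triple_comp c t') n))"
proof -
  have "comp_word c (word_path \<phi> (wpow z n)) = wpow (comp_word c (word_path \<phi> z)) n" for z
    by (induction n) simp_all
  moreover have "free_eq (comp_word c (word_path \<phi> z)) (triple_comp c s)" if "teq (teval \<phi> z) s" for z s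
    using that unfolding teq_iff_triple_comp comp_word_word_path by blast
  ultimately show ?thesis
    using assms unfolding comp_word_word_path_comm by (simp add: free_eq_comm free_eq_wpow)
qed

lemma eta_integral_double_commutator:
  fixes n :: nat
  assumes x1: "teq (teval \<phi> x1) ([(X1, True)], [(X1, False)], [])"
    and x2: "teq (teval \<phi> x2) ([(X2, True)], [], [(X2, False)])"
    and y1: "teq (teval \<phi> y1) ([], [(X1, True)], [(X1, False)])"
    and y2: "teq (teval \<phi> y2) ([(X2, False)], [(X2, True)], [])"
  defines "w \<equiv> comm (comm (wpow x1 n) (wpow x2 n)) (comm (wpow y1 n) (wpow y2 n))"
  shows "null_path (word_path \<phi> w) \<and> eta_integral \<phi> w = 2 * int n ^ 4"
proof -
  define u where "u = comm (wpow x1 n) (wpow x2 n)"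
  define v where "v = comm (wpow y1 n) (wpow y2 n)"
  have u: "free_eq (comp_word c (word_path \<phi> u)) (comp_word c (map (Pair Fa) (commutator_word n)))"
    for c
    using comp_word_word_path_comm_wpow[OF x1 x2, of c n]
    by (cases c) (auto simp: u_def comp_word_map_Pair commutator_word_def
        intro: free_eq_trans[OF _ free_eq_comm_Nil_left] free_eq_trans[OF _ free_eq_comm_Nil_right])
  have v: "free_eq (comp_word c (word_path \<phi> v)) (comp_word c (map (Pair Fb) (commutator_word n)))"
    for c
    using comp_word_word_path_comm_wpow[OF y1 y2, of c n]
    by (cases c) (auto simp: v_def comp_word_map_Pair commutator_word_def
        intro: free_eq_trans[OF _ free_eq_comm_Nil_left] free_eq_trans[OF _ free_eq_comm_Nil_right])
  have "free_eq (comp_word c (word_path \<phi> (comm u v))) []" for c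
    unfolding comp_word_word_path_comm
    using free_eq_comm[OF u[of c] v[of c]]
    by (cases c) (auto simp: comp_word_map_Pair
        intro: free_eq_trans[OF _ free_eq_comm_Nil_left] free_eq_trans[OF _ free_eq_comm_Nil_right])
  moreover have "eta_integral \<phi> (comm u v) = 2 * int n ^ 4"
    using line_int_eta_commutator[OF u v]
    by (simp add: eta_integral_def comm_def word_path_winv)
  ultimately show ?thesis
    unfolding null_path_def w_def u_def v_def by blast
qed

lemma quartic_eta_integral_words:
  assumes "\<forall>t. inK t \<longrightarrow> (\<exists>w. letters w \<subseteq> S \<and> teq (teval \<phi> w) t)"
  shows "\<exists>L. \<forall>n. \<exists>w. letters w \<subseteq> S \<and> length w \<le> L * n \<and> null_path (word_path \<phi> w)
    \<and> eta_integral \<phi> w = 2 * int n ^ 4"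
proof -
  have "inK ([(X1, True)], [(X1, False)], [])" "inK ([(X2, True)], [], [(X2, False)])"
    "inK ([], [(X1, True)], [(X1, False)])" "inK ([(X2, False)], [(X2, True)], [])"
    by (auto simp: inK_def)
  then obtain x1 x2 y1 y2 where S: "letters x1 \<subseteq> S" "letters x2 \<subseteq> S" "letters y1 \<subseteq> S" "letters y2 \<subseteq> S"
    and x1: "teq (teval \<phi> x1) ([(X1, True)], [(X1, False)], [])"
    and x2: "teq (teval \<phi> x2) ([(X2, True)], [], [(X2, False)])"
    and y1: "teq (teval \<phi> y1) ([], [(X1, True)], [(X1, False)])"
    and y2: "teq (teval \<phi> y2) ([(X2, False)], [(X2, True)], [])"
    using assms by metis
  define w where "w n = comm (comm (wpow x1 n) (wpow x2 n)) (comm (wpow y1 n) (wpow y2 n))" for n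
  have "letters (w n) \<subseteq> S" for n
    using S letters_wpow by (fastforce simp: w_def)
  moreover have "length (w n) = 4 * (length x1 + length x2 + length y1 + length y2) * n" for n
    by (simp add: w_def length_comm length_wpow algebra_simps)
  ultimately show ?thesis
    using eta_integral_double_commutator[OF x1 x2 y1 y2] unfolding w_def by (metis order_refl)
qed

lemma area_le_dehn:
  assumes "finite S" and "letters w \<subseteq> S" and "length w \<le> N" and "null_pres S R w"
  shows "area S R w \<le> dehn S R N"
proof -
  have "{w. letters w \<subseteq> S \<and> length w \<le> N \<and> null_pres S R w}
      \<subseteq> {w. set w \<subseteq> S \<times> UNIV \<and> length w \<le> N}"
    by (auto simp: letters_def)
  moreover have "finite {w. set w \<subseteq> S \<times> (UNIV :: bool set) \<and> length w \<le> N}"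
    using \<open>finite S\<close> by (intro finite_lists_length_le) simp
  ultimately have "finite {w. letters w \<subseteq> S \<and> length w \<le> N \<and> null_pres S R w}"
    by (rule finite_subset)
  then have "finite {area S R w | w. letters w \<subseteq> S \<and> length w \<le> N \<and> null_pres S R w}"
    by (simp add: setcompr_eq_image)
  then show ?thesis
    unfolding dehn_def using assms by (blast intro: Max_ge)
qed

lemma null_path_relator:
  assumes "presents_K S R \<phi>" and "r \<in> R"
  shows "null_path (word_path \<phi> r)"
proof -
  have "area_witness S R r [([], r, True)]"
    using assms(2) by (simp add: area_witness_def prod_conj_def)
  moreover have "letters r \<subseteq> S"
    using assms unfolding presents_K_def finite_pres_def by blast
  ultimately show ?thesis
    using assms(1) unfolding presents_K_def null_pres_def null_path_word_path_iff by blast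
qed

lemma quartic_area_words:
  assumes "presents_K S R \<phi>"
  shows "\<exists>L M. \<forall>n. \<exists>w. letters w \<subseteq> S \<and> length w \<le> L * n \<and> null_pres S R w
    \<and> n ^ 4 \<le> M * area S R w"
proof -
  have K: "\<forall>s\<in>S. inK (\<phi> s)" and "finite R"
    and gen: "\<forall>t. inK t \<longrightarrow> (\<exists>w. letters w \<subseteq> S \<and> teq (teval \<phi> w) t)"
    and pres: "\<forall>w. letters w \<subseteq> S \<longrightarrow> (teq (teval \<phi> w) ([], [], []) \<longleftrightarrow> null_pres S R w)"
    using assms unfolding presents_K_def finite_pres_def by auto
  have R: "\<forall>r\<in>R. null_path (word_path \<phi> r)"
    using null_path_relator[OF assms] by blast
  obtain L where words: "\<forall>n. \<exists>w. letters w \<subseteq> S \<and> length w \<le> L * n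
      \<and> null_path (word_path \<phi> w) \<and> eta_integral \<phi> w = 2 * int n ^ 4"
    using quartic_eta_integral_words[OF gen] by blast
  define M where "M = nat (\<Sum>r\<in>R. \<bar>eta_integral \<phi> r\<bar>)"
  have "\<exists>w. letters w \<subseteq> S \<and> length w \<le> L * n \<and> null_pres S R w \<and> n ^ 4 \<le> M * area S R w" for n
  proof -
    obtain w where S: "letters w \<subseteq> S" and len: "length w \<le> L * n"
      and null: "null_path (word_path \<phi> w)" and int: "eta_integral \<phi> w = 2 * int n ^ 4"
      using words by blast
    have np: "null_pres S R w"
      using pres S null by (simp add: null_path_word_path_iff)
    have "\<bar>eta_integral \<phi> w\<bar> \<le> int (area S R w) * int M"
      using abs_eta_integral_le_area[OF K R \<open>finite R\<close> np] by (simp add: M_def sum_nonneg)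
    then have "2 * int n ^ 4 \<le> int (area S R w) * int M"
      using int by simp
    moreover have "0 \<le> int n ^ 4"
      by simp
    ultimately have "int n ^ 4 \<le> int (area S R w) * int M"
      by linarith
    then have "int (n ^ 4) \<le> int (area S R w * M)"
      by simp
    then have "n ^ 4 \<le> M * area S R w"
      by (simp only: of_nat_le_iff mult.commute)
    with S len np show ?thesis
      by blast
  qed
  then show ?thesis by blast
qed

theorem proposition4p16:
  fixes S :: "'s set" and R :: "'s word set" and \<phi> :: "'s \<Rightarrow> triple"
  assumes "presents_K S R \<phi>"
  shows "dehn_dominates (dehn S R) (\<lambda>N. N ^ 4)"
proof -
  obtain L M where words: "\<forall>n. \<exists>w. letters w \<subseteq> S \<and> length w \<le> L * n \<and> null_pres S R w
      \<and> n ^ 4 \<le> M * area S R w"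
    using quartic_area_words[OF assms] by blast
  have "finite S"
    using assms unfolding presents_K_def finite_pres_def by blast
  define C where "C = M + L + 1"
  have "n ^ 4 \<le> C * dehn S R (C * n + C)" for n
  proof -
    obtain w where "letters w \<subseteq> S" "length w \<le> L * n" "null_pres S R w" "n ^ 4 \<le> M * area S R w"
      using words by blast
    moreover from this have "area S R w \<le> dehn S R (C * n + C)"
      by (intro area_le_dehn[OF \<open>finite S\<close>]) (auto simp: C_def add_mult_distrib)
    ultimately show ?thesis
      unfolding C_def by (metis add_mult_distrib le_add1 mult_le_mono order_trans)
  qed
  moreover have "0 < C"
    by (simp add: C_def)
  ultimately show ?thesis
    unfolding dehn_dominates_def by (metis add.assoc trans_le_add1)
qed

end
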